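(* Let $K\ge1$, let $q_1,\dots,q_K$ be distinct primes, $p=q_1\cdots q_K$, $Q=\sum_{j=1}^K 1/q_j$, and let $d\ge0$ be an integer. For each $j$ let $\Lambda_j=q_j\mathbb Z$ and $$\Lambda_j^-=\{n\in\Lambda_j:\ \exists\, j'\ne j,\ \exists\, n'\in\Lambda_{j'}\text{ with }|n-n'|\le d\},\qquad \Lambda=\bigcup_{j=1}^K(\Lambda_j\setminus\Lambda_j^-).$$ Then for every integer $n_0$, $$pQ\Big(1-\frac{2K(d+1)}{\min_{j}q_j}\Big)<\#\big(\Lambda\cap[n_0,n_0+p)\big)\le pQ.$$ *)

theory Defs
  imports Complex_Main "HOL-Computational_Algebra.Primes"
begin

definition Lam :: "(nat \<Rightarrow> nat) \<Rightarrow> nat \<Rightarrow> int set" where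
  "Lam q j = {n. int (q j) dvd n}"

definition Lam_minus :: "nat \<Rightarrow> (nat \<Rightarrow> nat) \<Rightarrow> nat \<Rightarrow> nat \<Rightarrow> int set" where
  "Lam_minus K q d j = {n \<in> Lam q j. \<exists>j'\<in>{1..K}. j' \<noteq> j \<and> (\<exists>n'\<in>Lam q j'. \<bar>n - n'\<bar> \<le> int d)}"

definition LamU :: "nat \<Rightarrow> (nat \<Rightarrow> nat) \<Rightarrow> nat \<Rightarrow> int set" where
  "LamU K q d = (\<Union>j\<in>{1..K}. Lam q j - Lam_minus K q d j)"

end

theory Submission
  imports Defs "HOL-Number_Theory.Cong"
begin

text \<open>A point of \<open>Lam q j\<close> lying in some other lattice \<open>Lam q j'\<close> belongs to
  \<open>Lam_minus K q d j\<close> (take \<open>n' = n\<close>), so the sets \<open>Lam q j - Lam_minus K q d j\<close> are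
  pairwise disjoint and the count in a window of length \<open>p\<close> is
  \<open>\<Sum>j. p / q j - #(Lam_minus K q d j \<inter> window)\<close>; this gives the upper bound.
  A point of \<open>Lam_minus K q d j\<close> is divisible by \<open>q j\<close> and congruent to some
  \<open>r \<in> [-d, d]\<close> modulo some \<open>q j'\<close> with \<open>j' \<noteq> j\<close>. By the Chinese remainder theorem each
  pair \<open>(j', r)\<close> accounts for exactly \<open>p / (q j * q j') \<le> p / (q j * min q)\<close> points of the
  window, so \<open>#(Lam_minus K q d j \<inter> window) \<le> (K - 1) (2 d + 1) p / (q j * min q)\<close>,
  and \<open>(K - 1) (2 d + 1) < 2 K (d + 1)\<close>.\<close>

lemma card_cong_block:
  fixes a r :: int and c :: nat
  assumes "c > 0"
  shows "card {n \<in> {a..<a + int c}. [n = r] (mod int c)} = 1"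
proof -
  have "{n \<in> {a..<a + int c}. [n = r] (mod int c)} = {a + (r - a) mod int c}"
  proof safe
    fix n assume n: "n \<in> {a..<a + int c}" "[n = r] (mod int c)"
    then have "(n - a) mod int c = (r - a) mod int c"
      by (metis cong_def cong_diff cong_refl)
    moreover have "(n - a) mod int c = n - a" using n(1) by simp
    ultimately show "n = a + (r - a) mod int c" by simp
  next
    show "[a + (r - a) mod int c = r] (mod int c)"
      by (simp add: cong_def mod_add_right_eq)
  qed (use assms in simp)
  then show ?thesis by simp
qed

lemma card_cong_window:
  fixes a r :: int and c m :: nat
  assumes "c > 0" "c dvd m"
  shows "card {n \<in> {a..<a + int m}. [n = r] (mod int c)} = m div c"
proof -
  let ?C = "\<lambda>lo hi. {n \<in> {lo..<hi}. [n = r] (mod int c)}"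
  have fin: "finite (?C lo hi)" for lo hi
    by (rule finite_subset[of _ "{lo..<hi}"]) auto
  have blocks: "card (?C a (a + int k * int c)) = k" for k
  proof (induction k)
    case (Suc k)
    let ?b = "a + int k * int c"
    have split: "?C a (a + int (Suc k) * int c) = ?C a ?b \<union> ?C ?b (?b + int c)"
    proof -
      have "a + int (Suc k) * int c = ?b + int c"
        by (simp add: algebra_simps)
      moreover have "{a..<?b + int c} = {a..<?b} \<union> {?b..<?b + int c}"
        by (rule ivl_disj_un_two(3)[symmetric]) simp_all
      ultimately show ?thesis by (simp only:) auto
    qed
    have "card (?C a ?b \<union> ?C ?b (?b + int c))
        = card (?C a ?b) + card (?C ?b (?b + int c))"
      by (intro card_Un_disjoint fin) auto
    then show ?case
      using split Suc card_cong_block[OF assms(1)] by simp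
  qed simp
  obtain k where "m = c * k"
    using assms(2) by (rule dvdE)
  then show ?thesis
    using blocks[of k] assms(1) by (simp add: mult.commute)
qed

lemma dvd_and_dvd_diff_iff_cong:
  fixes a b r :: int
  assumes "coprime a b"
  obtains s where "\<And>n. a dvd n \<and> b dvd n - r \<longleftrightarrow> [n = s] (mod a * b)"
proof -
  obtain s where s: "[s = 0] (mod a)" "[s = r] (mod b)"
    using binary_chinese_remainder_int[OF assms] by blast
  have "a dvd n \<and> b dvd n - r \<longleftrightarrow> [n = s] (mod a * b)" for n
  proof -
    have "a dvd n \<and> b dvd n - r \<longleftrightarrow> [n = s] (mod a) \<and> [n = s] (mod b)"
      using s by (metis cong_0_iff cong_iff_dvd_diff cong_sym cong_trans)
    also have "\<dots> \<longleftrightarrow> [n = s] (mod a * b)"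
      using assms coprime_cong_mult cong_dvd_modulus dvd_triv_left dvd_triv_right by metis
    finally show ?thesis .
  qed
  then show thesis by (rule that)
qed

lemma card_dvd_and_dvd_diff_window:
  fixes a b m :: nat and r n0 :: int
  assumes "coprime a b" "a > 0" "b > 0" "a * b dvd m"
  shows "card {n \<in> {n0..<n0 + int m}. int a dvd n \<and> int b dvd n - r} = m div (a * b)"
proof -
  obtain s where "\<And>n. int a dvd n \<and> int b dvd n - r \<longleftrightarrow> [n = s] (mod int (a * b))"
    using dvd_and_dvd_diff_iff_cong[of "int a" "int b" r] assms(1) by auto
  then show ?thesis using card_cong_window[of "a * b" m n0 s] assms(2-4) by simp
qed

lemma card_Lam_window:
  assumes "q j > 0" "q j dvd p"
  shows "card (Lam q j \<inter> {n0..<n0 + int p}) = p div q j"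
proof -
  have "Lam q j \<inter> {n0..<n0 + int p} = {n \<in> {n0..<n0 + int p}. [n = 0] (mod int (q j))}"
    unfolding Lam_def by (auto simp: cong_0_iff)
  then show ?thesis using card_cong_window[OF assms] by simp
qed

lemma Lam_minus_subset_Lam: "Lam_minus K q d j \<subseteq> Lam q j"
  unfolding Lam_minus_def by blast

lemma Lam_inter_subset_Lam_minus:
  assumes "j' \<in> {1..K}" "j' \<noteq> j"
  shows "Lam q j \<inter> Lam q j' \<subseteq> Lam_minus K q d j"
  using assms unfolding Lam_minus_def by force

lemma Lam_minus_subset_near_pairs:
  "Lam_minus K q d j \<subseteq>
     (\<Union>j'\<in>{1..K} - {j}. \<Union>r\<in>{- int d..int d}. {n. int (q j) dvd n \<and> int (q j') dvd n - r})"
proof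
  fix n assume "n \<in> Lam_minus K q d j"
  then obtain j' n' where
    "n \<in> Lam q j" "j' \<in> {1..K} - {j}" "n' \<in> Lam q j'" "\<bar>n - n'\<bar> \<le> int d"
    unfolding Lam_minus_def by blast
  then show "n \<in> (\<Union>j'\<in>{1..K} - {j}. \<Union>r\<in>{- int d..int d}. {n. int (q j) dvd n \<and> int (q j') dvd n - r})"
    unfolding Lam_def by (intro UN_I[of j'] UN_I[of "n - n'"]) auto
qed

lemma card_Lam_minus_window_le_sum:
  assumes j: "j \<in> {1..K}"
    and pos: "\<And>i. i \<in> {1..K} \<Longrightarrow> q i > 0"
    and dvd: "\<And>i. i \<in> {1..K} \<Longrightarrow> q i dvd p"
    and cop: "pairwise (\<lambda>i i'. coprime (q i) (q i')) {1..K}"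
  shows "card (Lam_minus K q d j \<inter> {n0..<n0 + int p})
           \<le> (\<Sum>j'\<in>{1..K} - {j}. (2 * d + 1) * (p div (q j * q j')))"
proof -
  let ?W = "{n0..<n0 + int p}"
  let ?S = "\<lambda>j' r. {n \<in> ?W. int (q j) dvd n \<and> int (q j') dvd n - r}"
  have "Lam_minus K q d j \<inter> ?W \<subseteq> (\<Union>j'\<in>{1..K} - {j}. \<Union>r\<in>{- int d..int d}. ?S j' r)"
    using Lam_minus_subset_near_pairs[of K q d j] by blast
  then have "card (Lam_minus K q d j \<inter> ?W)
      \<le> card (\<Union>j'\<in>{1..K} - {j}. \<Union>r\<in>{- int d..int d}. ?S j' r)"
    by (rule card_mono[rotated]) (auto intro: finite_subset[of _ ?W])
  also have "\<dots> \<le> (\<Sum>j'\<in>{1..K} - {j}. card (\<Union>r\<in>{- int d..int d}. ?S j' r))"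
    by (rule card_UN_le) simp
  also have "\<dots> \<le> (\<Sum>j'\<in>{1..K} - {j}. \<Sum>r\<in>{- int d..int d}. card (?S j' r))"
    by (intro sum_mono card_UN_le) simp
  also have "\<dots> = (\<Sum>j'\<in>{1..K} - {j}. (2 * d + 1) * (p div (q j * q j')))"
  proof (rule sum.cong[OF refl])
    fix j' assume j': "j' \<in> {1..K} - {j}"
    then have "coprime (q j) (q j')"
      using pairwiseD(1)[OF cop j] by blast
    moreover have "q j * q j' dvd p"
      using divides_mult[OF dvd[OF j] dvd] j' \<open>coprime (q j) (q j')\<close> by blast
    ultimately have "card (?S j' r) = p div (q j * q j')" for r
      using pos j j' by (intro card_dvd_and_dvd_diff_window) auto
    then show "(\<Sum>r\<in>{- int d..int d}. card (?S j' r)) = (2 * d + 1) * (p div (q j * q j'))"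
      by (simp add: nat_add_distrib nat_mult_distrib)
  qed
  finally show ?thesis .
qed

lemma card_Lam_minus_window_le:
  assumes j: "j \<in> {1..K}"
    and pos: "\<And>i. i \<in> {1..K} \<Longrightarrow> q i > 0"
    and dvd: "\<And>i. i \<in> {1..K} \<Longrightarrow> q i dvd p"
    and cop: "pairwise (\<lambda>i i'. coprime (q i) (q i')) {1..K}"
  shows "real (card (Lam_minus K q d j \<inter> {n0..<n0 + int p}))
           \<le> real (K - 1) * (2 * real d + 1) * real p / (real (q j) * real (Min (q ` {1..K})))"
proof -
  let ?m = "Min (q ` {1..K})"
  let ?bound = "(2 * real d + 1) * real p / (real (q j) * real ?m)"
  have term_le: "(2 * real d + 1) * real (p div (q j * q j')) \<le> ?bound"
    if j': "j' \<in> {1..K} - {j}" for j'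
  proof -
    have "q j * q j' dvd p"
      using divides_mult[OF dvd[OF j] dvd] j' pairwiseD(1)[OF cop j] by blast
    then have "real (p div (q j * q j')) = real p / (real (q j) * real (q j'))"
      by (simp add: real_of_nat_div)
    also have "\<dots> \<le> real p / (real (q j) * real ?m)"
      using j j' pos by (intro divide_left_mono mult_left_mono) auto
    finally have "(2 * real d + 1) * real (p div (q j * q j'))
        \<le> (2 * real d + 1) * (real p / (real (q j) * real ?m))"
      by (rule mult_left_mono) simp
    then show ?thesis
      by (simp only: times_divide_eq_right)
  qed
  have "real (card (Lam_minus K q d j \<inter> {n0..<n0 + int p}))
      \<le> real (\<Sum>j'\<in>{1..K} - {j}. (2 * d + 1) * (p div (q j * q j')))"
    using card_Lam_minus_window_le_sum[OF assms] by (simp only: of_nat_le_iff)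
  also have "\<dots> = (\<Sum>j'\<in>{1..K} - {j}. (2 * real d + 1) * real (p div (q j * q j')))"
    by (simp add: algebra_simps)
  also have "\<dots> \<le> (\<Sum>j'\<in>{1..K} - {j}. ?bound)"
    using term_le by (rule sum_mono)
  also have "\<dots> = real (K - 1) * ?bound"
    using j by simp
  finally show ?thesis by simp
qed

lemma card_LamU_window:
  assumes pos: "\<And>j. j \<in> {1..K} \<Longrightarrow> q j > 0"
    and dvd: "\<And>j. j \<in> {1..K} \<Longrightarrow> q j dvd p"
  shows "real (card (LamU K q d \<inter> {n0..<n0 + int p}))
           = (\<Sum>j\<in>{1..K}. real p / real (q j)
                - real (card (Lam_minus K q d j \<inter> {n0..<n0 + int p})))"
proof -
  let ?W = "{n0..<n0 + int p}"
  let ?A = "\<lambda>j. (Lam q j - Lam_minus K q d j) \<inter> ?W"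
  have "card (LamU K q d \<inter> ?W) = card (\<Union>j\<in>{1..K}. ?A j)"
    unfolding LamU_def by (simp add: Int_UN_distrib2)
  also have "\<dots> = (\<Sum>j\<in>{1..K}. card (?A j))"
  proof (rule card_UN_disjoint)
    show "\<forall>j\<in>{1..K}. \<forall>j'\<in>{1..K}. j \<noteq> j' \<longrightarrow> ?A j \<inter> ?A j' = {}"
      using Lam_inter_subset_Lam_minus by blast
  qed auto
  finally have "real (card (LamU K q d \<inter> ?W)) = (\<Sum>j\<in>{1..K}. real (card (?A j)))"
    by simp
  also have "\<dots> = (\<Sum>j\<in>{1..K}. real p / real (q j) - real (card (Lam_minus K q d j \<inter> ?W)))"
  proof (rule sum.cong[OF refl])
    fix j assume j: "j \<in> {1..K}"
    have "?A j = (Lam q j \<inter> ?W) - (Lam_minus K q d j \<inter> ?W)"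
      by blast
    moreover have "Lam_minus K q d j \<inter> ?W \<subseteq> Lam q j \<inter> ?W"
      using Lam_minus_subset_Lam by blast
    ultimately have "card (?A j) = card (Lam q j \<inter> ?W) - card (Lam_minus K q d j \<inter> ?W)"
      by (simp add: card_Diff_subset finite_subset)
    moreover have "card (Lam_minus K q d j \<inter> ?W) \<le> card (Lam q j \<inter> ?W)"
      using \<open>Lam_minus K q d j \<inter> ?W \<subseteq> Lam q j \<inter> ?W\<close> by (intro card_mono) auto
    moreover have "real (card (Lam q j \<inter> ?W)) = real p / real (q j)"
      using card_Lam_window[of q j, OF pos[OF j] dvd[OF j]] dvd[OF j] by (simp add: real_of_nat_div)
    ultimately show
      "real (card (?A j)) = real p / real (q j) - real (card (Lam_minus K q d j \<inter> ?W))"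
      by simp
  qed
  finally show ?thesis .
qed

lemma card_LamU_window_bounds:
  assumes pos: "\<And>j. j \<in> {1..K} \<Longrightarrow> q j > 0"
    and dvd: "\<And>j. j \<in> {1..K} \<Longrightarrow> q j dvd p"
    and cop: "pairwise (\<lambda>i i'. coprime (q i) (q i')) {1..K}"
  shows "real p * (\<Sum>j\<in>{1..K}. 1 / real (q j))
           * (1 - real (K - 1) * (2 * real d + 1) / real (Min (q ` {1..K})))
         \<le> real (card (LamU K q d \<inter> {n0..<n0 + int p}))"
    and "real (card (LamU K q d \<inter> {n0..<n0 + int p})) \<le> real p * (\<Sum>j\<in>{1..K}. 1 / real (q j))"
proof -
  let ?W = "{n0..<n0 + int p}"
  let ?m = "Min (q ` {1..K})"
  have pQ: "real p * (\<Sum>j\<in>{1..K}. 1 / real (q j)) = (\<Sum>j\<in>{1..K}. real p / real (q j))"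
    by (simp add: sum_distrib_left)
  let ?c = "real (K - 1) * (2 * real d + 1) / real ?m"
  have "real p * (\<Sum>j\<in>{1..K}. 1 / real (q j)) * (1 - ?c)
      = (\<Sum>j\<in>{1..K}. real p / real (q j)) - ?c * (\<Sum>j\<in>{1..K}. real p / real (q j))"
    unfolding pQ by (simp add: algebra_simps)
  also have "\<dots> = (\<Sum>j\<in>{1..K}. real p / real (q j) - ?c * (real p / real (q j)))"
    by (simp add: sum_subtractf sum_distrib_left)
  also have "\<dots> = (\<Sum>j\<in>{1..K}. real p / real (q j)
      - real (K - 1) * (2 * real d + 1) * real p / (real (q j) * real ?m))"
    by (simp add: mult.commute)
  also have "\<dots> \<le> (\<Sum>j\<in>{1..K}. real p / real (q j) - real (card (Lam_minus K q d j \<inter> ?W)))"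
    using card_Lam_minus_window_le[OF _ pos dvd cop] by (intro sum_mono) force
  also have "\<dots> = real (card (LamU K q d \<inter> ?W))"
    using card_LamU_window[OF pos dvd] by simp
  finally show "real p * (\<Sum>j\<in>{1..K}. 1 / real (q j))
      * (1 - real (K - 1) * (2 * real d + 1) / real ?m) \<le> real (card (LamU K q d \<inter> ?W))" .
  show "real (card (LamU K q d \<inter> ?W)) \<le> real p * (\<Sum>j\<in>{1..K}. 1 / real (q j))"
  proof -
    have "(\<Sum>j\<in>{1..K}. real p / real (q j) - real (card (Lam_minus K q d j \<inter> ?W)))
        \<le> (\<Sum>j\<in>{1..K}. real p / real (q j))"
      by (intro sum_mono) simp
    then show ?thesis
      using card_LamU_window[OF pos dvd] pQ by simp
  qed
qed

theorem mainTheorem4: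
  fixes K d :: nat and q :: "nat \<Rightarrow> nat" and p :: nat and Q :: real and n0 :: int
  assumes "K \<ge> 1"
    and "\<And>j. j \<in> {1..K} \<Longrightarrow> prime (q j)"
    and "inj_on q {1..K}"
    and "p = (\<Prod>j\<in>{1..K}. q j)"
    and "Q = (\<Sum>j\<in>{1..K}. 1 / real (q j))"
  shows "real p * Q * (1 - 2 * real K * (real d + 1) / real (Min (q ` {1..K})))
           < real (card (LamU K q d \<inter> {n0..<n0 + int p}))
       \<and> real (card (LamU K q d \<inter> {n0..<n0 + int p})) \<le> real p * Q"
proof -
  have pos: "\<And>j. j \<in> {1..K} \<Longrightarrow> q j > 0"
    using assms(2) prime_gt_0_nat by blast
  have dvd: "\<And>j. j \<in> {1..K} \<Longrightarrow> q j dvd p"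
    unfolding assms(4) by (rule dvd_prodI) simp
  have cop: "pairwise (\<lambda>i i'. coprime (q i) (q i')) {1..K}"
    using assms(2) inj_on_contraD[OF assms(3)] by (intro pairwiseI primes_coprime) auto
  have "Min (q ` {1..K}) > 0"
    using pos assms(1) by (subst Min_gr_iff) auto
  moreover have "p > 0"
    unfolding assms(4) using pos by (intro prod_pos) auto
  moreover have "Q > 0"
    unfolding assms(5) using pos assms(1) by (intro sum_pos) auto
  moreover have "real (K - 1) * (2 * real d + 1) < 2 * real K * (real d + 1)"
    using assms(1) by (simp add: of_nat_diff algebra_simps)
  ultimately have "real p * Q * (1 - 2 * real K * (real d + 1) / real (Min (q ` {1..K})))
      < real p * Q * (1 - real (K - 1) * (2 * real d + 1) / real (Min (q ` {1..K})))"
    by (intro mult_strict_left_mono) (auto intro: divide_strict_right_mono)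
  then show ?thesis
    using card_LamU_window_bounds[OF pos dvd cop, of d n0] unfolding assms(5) by linarith
qed

end
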